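(* Binary LCP-mergesort, as described in the context, correctly sorts any set $\mathcal{S}$ of $n$ strings and computes its LCP array $H$; it performs at most $L(H) + n\lceil \log_2 n\rceil$ character comparisons and runs in $O(D + n\log n)$ time.
   Context: Strings are finite sequences over a totally ordered alphabet $\Sigma$, terminated by an end-of-string character $0\notin\Sigma$ smaller than all characters; they are ordered lexicographically. $\mathrm{lcp}(s,t)$ is the length of the longest common prefix of $s,t$. For a sorted sequence $s_1\le\dots\le s_n$ its LCP array is $H=(\bot,h_2,\dots,h_n)$ with $h_i=\mathrm{lcp}(s_{i-1},s_i)$, and $L(H)=\sum_{i=2}^n h_i$. The distinguishing prefix size $D$ of $\mathcal{S}$ is the sum over all $s\in\mathcal S$ of the length of the shortest prefix of $s$ (including the terminator if needed) that is not a prefix of any other string of $\mathcal S$ (so $D\ge L(H)$). Let $\varepsilon$ denote the empty string ($\mathrm{lcp}(\varepsilon,s)=0$) and $\infty$ a sentinel string larger than all strings. LCP-Compare: given $(a,s_a,h_a)$ and $(b,s_b,h_b)$ where $h_a=\mathrm{lcp}(p,s_a)$, $h_b=\mathrm{lcp}(p,s_b)$ for some string $p\le s_a,s_b$: if $h_a<h_b$ return $(b,h_b,a,h_a)$; if $h_b<h_a$ return $(a,h_a,b,h_b)$; if $h_a=h_b$, set $h':=h_a$ and compare $s_a[h'+1]$ with $s_b[h'+1]$, incrementing $h'$ while these characters are equal and not the terminator; then return $(a,h_a,b,h')$ if $s_a[h'+1]\le s_b[h'+1]$ and $(b,h_b,a,h')$ otherwise. The returned tuple $(x,h_x,y,h')$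 satisfies $s_x\le s_y$, $\{x,y\}=\{a,b\}$, $h'=\mathrm{lcp}(s_a,s_b)$. Counting convention: each test of the loop condition yielding equality counts as one character comparison, and the final failing test together with the subsequent $\le$ test counts as one (ternary) comparison; cases $h_a\ne h_b$ use no character comparisons. Binary LCP-merge: given sorted $\mathcal S_1,\mathcal S_2$ with LCP arrays $H_1,H_2$ (with sentinel $\infty$ at the end of each), keep indices $i_1,i_2$ (initially 1) and values $h_1=h_2=0$, maintaining $h_k=\mathrm{lcp}(\mathcal S_k[i_k], \text{last output string})$ (last output initially $\varepsilon$). While input remains: call LCP-Compare on $(1,\mathcal S_1[i_1],h_1)$ and $(2,\mathcal S_2[i_2],h_2)$ obtaining $(x,\cdot,y,h')$; append $\mathcal S_x[i_x]$ to the output with LCP entry $h_x$; increment $i_x$; set $h_x:=H_x[i_x]$ and $h_y:=h'$. Binary LCP-mergesort: a set of size $\le 1$ is returned as is; otherwise split into parts of sizes $\lfloor n/2\rfloor$ and $\lceil n/2\rceil$, sort each recursively (with LCP arrays), and combine them with binary LCP-merge. *)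

theory Defs
  imports Complex_Main "HOL-Library.Sublist" "HOL-Library.Multiset"
begin

text \<open>A character position of a
(possibly sentinel) string yields: Term (the end-of-string character 0, smaller than all
characters), Ch c (a character of the alphabet), or Top (the characters of the sentinel
string infinity, larger than all).\<close>

datatype 'a chr = Term | Ch 'a | Top

fun chr_le :: "'a::linorder chr \<Rightarrow> 'a chr \<Rightarrow> bool" where
  "chr_le Term _ = True"
| "chr_le (Ch a) Term = False"
| "chr_le (Ch a) (Ch b) = (a \<le> b)"
| "chr_le (Ch a) Top = True"
| "chr_le Top Top = True"
| "chr_le Top _ = False"

text \<open>Extended strings: Some s is an ordinary string, None is the sentinel infinity.
Positions are 1-indexed as in the paper.\<close>

definition char_at :: "'a list option \<Rightarrow> nat \<Rightarrow> 'a chr" where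
  "char_at x i = (case x of None \<Rightarrow> Top
     | Some s \<Rightarrow> (if 1 \<le> i \<and> i \<le> length s then Ch (s ! (i - 1)) else Term))"

definition tstr :: "'a list \<Rightarrow> 'a chr list" where
  "tstr s = map Ch s @ [Term]"

fun lcp :: "'a list \<Rightarrow> 'a list \<Rightarrow> nat" where
  "lcp (x # xs) (y # ys) = (if x = y then Suc (lcp xs ys) else 0)"
| "lcp _ _ = 0"

text \<open>Lexicographic order (terminator smaller than all characters, so a proper prefix is
smaller): this is lexordp_eq from the library.\<close>

text \<open>L(H): sum of the LCP array entries h_2..h_n (the first entry is bottom).\<close>
definition LH :: "nat list \<Rightarrow> nat" where
  "LH H = sum_list (drop 1 H)"

definition dist_prefix :: "'a list set \<Rightarrow> 'a list \<Rightarrow> nat" where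
  "dist_prefix S s = (LEAST k. \<forall>t \<in> S - {s}. \<not> prefix (take k (tstr s)) (tstr t))"

definition D :: "'a list set \<Rightarrow> nat" where
  "D S = (\<Sum>s\<in>S. dist_prefix S s)"

text \<open>Number of successful equality tests of the inner loop started at h.\<close>
definition scan_len :: "'a list option \<Rightarrow> 'a list option \<Rightarrow> nat \<Rightarrow> nat" where
  "scan_len a b h = (LEAST k. \<not> (char_at a (h + k + 1) = char_at b (h + k + 1)
                                   \<and> char_at a (h + k + 1) \<noteq> Term))"

text \<open>Returns ((x, h_x, y, h'), number of character comparisons).\<close>
definition lcp_compare ::
  "nat \<times> 'a::linorder list option \<times> nat \<Rightarrow> nat \<times> 'a list option \<times> nat
     \<Rightarrow> (nat \<times> nat \<times> nat \<times> nat) \<times> nat" where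
  "lcp_compare A B = (case A of (a, sa, ha) \<Rightarrow> case B of (b, sb, hb) \<Rightarrow>
     if ha < hb then ((b, hb, a, ha), 0)
     else if hb < ha then ((a, ha, b, hb), 0)
     else (let k = scan_len sa sb ha; h' = ha + k in
           if chr_le (char_at sa (h' + 1)) (char_at sb (h' + 1))
           then ((a, ha, b, h'), k + 1) else ((b, hb, a, h'), k + 1)))"

text \<open>A sorted sequence with its LCP array is a list of pairs (string, LCP entry).
The current head of a remaining input (sentinel infinity if exhausted), and the LCP
entry of the next element (the sentinel's entry lcp(last, infinity) = 0).\<close>

definition hd_inf :: "('a list \<times> nat) list \<Rightarrow> 'a list option" where
  "hd_inf xs = (case xs of [] \<Rightarrow> None | (s, _) # _ \<Rightarrow> Some s)"

definition next_h :: "('a list \<times> nat) list \<Rightarrow> nat" where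
  "next_h xs = (case xs of [] \<Rightarrow> 0 | (_, h) # _ \<Rightarrow> h)"

text \<open>lcp_merge xs ys h1 h2 returns (output with LCP entries, character comparisons,
time steps). Each loop iteration costs one step plus its character comparisons.\<close>

function lcp_merge :: "('a::linorder list \<times> nat) list \<Rightarrow> ('a list \<times> nat) list \<Rightarrow> nat \<Rightarrow> nat
    \<Rightarrow> ('a list \<times> nat) list \<times> nat \<times> nat" where
  "lcp_merge xs ys h1 h2 =
    (if xs = [] \<and> ys = [] then ([], 0, 0)
     else (case lcp_compare (1, hd_inf xs, h1) (2, hd_inf ys, h2) of
       ((x, hx, y, h'), c) \<Rightarrow>
         if x = 1 then
           (case xs of [] \<Rightarrow> ([], c, 1 + c)
            | (s, _) # xs' \<Rightarrow> (case lcp_merge xs' ys (next_h xs') h' of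
                 (out, c', t') \<Rightarrow> ((s, hx) # out, c + c', 1 + c + t')))
         else
           (case ys of [] \<Rightarrow> ([], c, 1 + c)
            | (s, _) # ys' \<Rightarrow> (case lcp_merge xs ys' h' (next_h ys') of
                 (out, c', t') \<Rightarrow> ((s, hx) # out, c + c', 1 + c + t')))))"
  by pat_completeness auto
termination
  by (relation "measure (\<lambda>(xs, ys, _, _). length xs + length ys)") auto

text \<open>Returns (sorted sequence with LCP array, character comparisons, time steps).
The first LCP entry (bottom) is represented by 0.\<close>

function lcp_msort :: "'a::linorder list list \<Rightarrow> ('a list \<times> nat) list \<times> nat \<times> nat" where
  "lcp_msort xs =
    (if length xs \<le> 1 then (map (\<lambda>s. (s, 0)) xs, 0, 1)
     else (let m = length xs div 2 in
       case lcp_msort (take m xs) of (l, c1, t1) \<Rightarrow>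
       case lcp_msort (drop m xs) of (r, c2, t2) \<Rightarrow>
       case lcp_merge l r 0 0 of (out, c3, t3) \<Rightarrow>
         (out, c1 + c2 + c3, 1 + t1 + t2 + t3)))"
  by pat_completeness auto
termination
  by (relation "measure length") auto

end

theory Submission
  imports Defs "HOL-Library.Log_Nat"
begin

(* Strings are compared lexicographically (lexordp_eq).
   1. Basic facts on lcp: symmetry, the ultrametric inequality
      min (lcp a b) (lcp b c) <= lcp a c, and the key order fact: if p <= a, p <= b and
      lcp p a < lcp p b then b <= a.  Together they give the specification of LCP-Compare:
      if both inputs carry their lcp with a common lower bound p, the call returns the
      smaller string, lcp of the two strings, and uses at most lcp(a,b) - h_other + 1
      character comparisons.
   2. Binary LCP-merge keeps the invariant that every remaining input is an "LCP chain"
      (sorted, with correct LCP entries) starting from the last output string.  Summing the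
      per-step comparison bound telescopes: comparisons <= (increase of the LCP sum) + n.
   3. By induction along the recursion of the mergesort, comparisons are bounded by
      L(H) + n * ceillog2 n (ceillog2 n = nat (ceiling (log 2 n)), from HOL-Library), and
      time by comparisons + n * ceillog2 n + 2n.
   4. Each LCP entry h_i = lcp(s_{i-1}, s_i) is smaller than the distinguishing prefix of
      s_i, so L(H) <= D; also n <= D + 1.  This turns the time bound into
      5 * (D + n log n + 1). *)

section \<open>Longest common prefixes\<close>

lemma char_at_Some: "char_at (Some s) (Suc i) = (if i < length s then Ch (s ! i) else Term)"
  by (simp add: char_at_def)

lemma lcp_sym: "lcp a b = lcp b a"
  by (induction a b rule: lcp.induct) auto

lemma lcp_le_length: "lcp a b \<le> length a" "lcp a b \<le> length b"
  by (induction a b rule: lcp.induct) auto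

lemma lcp_nth: "i < lcp a b \<Longrightarrow> a ! i = b ! i"
  by (induction a b arbitrary: i rule: lcp.induct) (auto simp: nth_Cons split: if_splits nat.splits)

lemma lcp_mismatch: "lcp a b < length a \<Longrightarrow> lcp a b < length b \<Longrightarrow> a ! lcp a b \<noteq> b ! lcp a b"
  by (induction a b rule: lcp.induct) auto

lemma take_lcp: "k \<le> lcp s t \<Longrightarrow> take k s = take k t"
  by (induction s t arbitrary: k rule: lcp.induct) (auto simp: take_Cons split: if_splits nat.splits)

lemma lcp_ultra: "min (lcp a b) (lcp b c) \<le> lcp a c"
proof (induction a b arbitrary: c rule: lcp.induct)
  case (1 x xs y ys)
  then show ?case by (cases c) auto
qed auto

lemma lexordp_eq_by_lcp:
  fixes p :: "'a::linorder list"
  assumes "lexordp_eq p a" "lexordp_eq p b" "lcp p a < lcp p b"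
  shows "lexordp_eq b a"
  using assms
proof (induction p arbitrary: a b)
  case (Cons x p)
  from Cons.prems obtain y a' where a: "a = y # a'" by (cases a) auto
  from Cons.prems obtain b' where b: "b = x # b'" by (cases b) (auto split: if_splits)
  show ?case
  proof (cases "y = x")
    case True
    then show ?thesis using Cons a b by auto
  next
    case False
    then have "x < y \<or> y < x" by (metis neq_iff)
    then show ?thesis using Cons.prems a b by auto
  qed
qed simp

lemma lexordp_eq_iff_char_after_lcp:
  "chr_le (char_at (Some a) (Suc (lcp a b))) (char_at (Some b) (Suc (lcp a b))) \<longleftrightarrow> lexordp_eq a b"
  by (induction a b rule: lcp.induct) (auto simp: char_at_Some)

section \<open>LCP-Compare\<close>

lemma scan_len_Some:
  assumes "h \<le> lcp a b"
  shows "scan_len (Some a) (Some b) h = lcp a b - h"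
  unfolding scan_len_def
proof (rule Least_equality)
  have "h + (lcp a b - h) + 1 = Suc (lcp a b)" using assms by simp
  then show "\<not> (char_at (Some a) (h + (lcp a b - h) + 1) = char_at (Some b) (h + (lcp a b - h) + 1)
            \<and> char_at (Some a) (h + (lcp a b - h) + 1) \<noteq> Term)"
    using lcp_le_length[of a b] lcp_mismatch[of a b] by (auto simp: char_at_Some)
next
  fix k
  assume stop: "\<not> (char_at (Some a) (h + k + 1) = char_at (Some b) (h + k + 1)
                  \<and> char_at (Some a) (h + k + 1) \<noteq> Term)"
  show "lcp a b - h \<le> k"
  proof (rule ccontr)
    assume "\<not> lcp a b - h \<le> k"
    then have "h + k < lcp a b" by simp
    then show False
      using stop lcp_le_length[of a b] lcp_nth[of "h + k" a b] by (auto simp: char_at_Some)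
  qed
qed

lemma scan_len_sentinel: "scan_len None (Some b) h = 0" "scan_len (Some a) None h = 0"
  unfolding scan_len_def by (rule Least_equality; auto simp: char_at_def)+

fun le_ext :: "'a::linorder list option \<Rightarrow> 'a list option \<Rightarrow> bool" where
  "le_ext (Some a) (Some b) = lexordp_eq a b"
| "le_ext None (Some b) = False"
| "le_ext _ None = True"

fun lcp_ext :: "'a list option \<Rightarrow> 'a list option \<Rightarrow> nat" where
  "lcp_ext (Some a) (Some b) = lcp a b"
| "lcp_ext _ _ = 0"

lemma lcp_ext_sym: "lcp_ext a b = lcp_ext b a"
  by (cases a; cases b) (auto simp: lcp_sym)

text \<open>Precondition of LCP-Compare for one argument: h is the lcp of the reference string p
  with a string above p (for the sentinel, h = 0).\<close>
definition lcp_from :: "'a::linorder list \<Rightarrow> 'a list option \<Rightarrow> nat \<Rightarrow> bool" where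
  "lcp_from p sa h = (case sa of None \<Rightarrow> h = 0 | Some a \<Rightarrow> lexordp_eq p a \<and> h = lcp p a)"

lemma lcp_compare_equal:
  assumes "h \<le> lcp a b"
    and r: "lcp_compare (1::nat, Some a, h) (2, Some b, h) = ((x, hx, y, h'), c)"
  shows "h' = lcp a b \<and> c + h = lcp a b + 1 \<and> hx = h \<and>
         (if x = 1 then lexordp_eq a b else x = 2 \<and> lexordp_eq b a)"
proof -
  have scan: "h + scan_len (Some a) (Some b) h = lcp a b"
    using scan_len_Some[OF assms(1)] assms(1) by simp
  show ?thesis
  proof (cases "lexordp_eq a b")
    case True
    then show ?thesis using r scan assms(1) lexordp_eq_iff_char_after_lcp[of a b]
      by (auto simp: lcp_compare_def Let_def)
  next
    case False
    then have "lexordp_eq b a" using lexordp_eq_linear by blast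
    with False show ?thesis using r scan assms(1) lexordp_eq_iff_char_after_lcp[of a b]
      by (auto simp: lcp_compare_def Let_def)
  qed
qed

lemma lcp_compare_spec:
  assumes A: "lcp_from p sa ha" and B: "lcp_from p sb hb" and ne: "sa \<noteq> None \<or> sb \<noteq> None"
    and r: "lcp_compare (1::nat, sa, ha) (2, sb, hb) = ((x, hx, y, h'), c)"
  shows "h' = lcp_ext sa sb \<and>
         (if x = 1 then hx = ha \<and> le_ext sa sb \<and> c + hb \<le> h' + 1
          else x = 2 \<and> hx = hb \<and> le_ext sb sa \<and> c + ha \<le> h' + 1)"
proof (cases sa)
  case None
  with ne A obtain b where "sb = Some b" "ha = 0" by (auto simp: lcp_from_def)
  with r None show ?thesis
    by (cases "hb = 0") (auto simp: lcp_compare_def scan_len_sentinel char_at_def split: if_splits)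
next
  case (Some a)
  show ?thesis
  proof (cases sb)
    case None
    with B have hb: "hb = 0" by (simp add: lcp_from_def)
    have "chr_le (char_at (Some a) 1) Top" by (cases "char_at (Some a) 1") auto
    with r None Some hb show ?thesis
      by (cases "ha = 0") (auto simp: lcp_compare_def scan_len_sentinel char_at_def split: if_splits)
  next
    case (Some b)
    with A B \<open>sa = Some a\<close> have pa: "lexordp_eq p a" "ha = lcp p a"
      and pb: "lexordp_eq p b" "hb = lcp p b" by (auto simp: lcp_from_def)
    show ?thesis
    proof (cases ha hb rule: linorder_cases)
      case less
      have "lcp a b = ha"
        using lcp_ultra[of a p b] lcp_ultra[of p b a] lcp_sym[of a p] lcp_sym[of b a] less pa pb
        by linarith
      with lexordp_eq_by_lcp[OF pa(1) pb(1)] less r pa pb \<open>sa = Some a\<close> Some show ?thesis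
        by (auto simp: lcp_compare_def)
    next
      case greater
      have "lcp a b = hb"
        using lcp_ultra[of b p a] lcp_ultra[of p a b] lcp_sym[of b p] lcp_sym[of b a] greater pa pb
        by linarith
      with lexordp_eq_by_lcp[OF pb(1) pa(1)] greater r pa pb \<open>sa = Some a\<close> Some show ?thesis
        by (auto simp: lcp_compare_def)
    next
      case equal
      have "ha \<le> lcp a b"
        using lcp_ultra[of a p b] lcp_sym[of a p] equal pa pb by linarith
      with lcp_compare_equal[of ha a b] r equal \<open>sa = Some a\<close> Some show ?thesis
        by auto
    qed
  qed
qed

section \<open>Binary LCP-merge\<close>

fun lcp_chain :: "'a::linorder list \<Rightarrow> ('a list \<times> nat) list \<Rightarrow> bool" where
  "lcp_chain p [] = True"
| "lcp_chain p ((s, h) # r) = (lexordp_eq p s \<and> h = lcp p s \<and> lcp_chain s r)"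

text \<open>Merge invariant for one input relative to the last output string p: the input is an
  LCP chain from p whose first entry is replaced by the current value h.\<close>
definition merge_input :: "'a::linorder list \<Rightarrow> ('a list \<times> nat) list \<Rightarrow> nat \<Rightarrow> bool" where
  "merge_input p xs h =
     (case xs of [] \<Rightarrow> h = 0 | (s, _) # r \<Rightarrow> lexordp_eq p s \<and> h = lcp p s \<and> lcp_chain s r)"

definition tail_lcps :: "('a list \<times> nat) list \<Rightarrow> nat" where
  "tail_lcps xs = sum_list (map snd (tl xs))"

lemma merge_input_lcp_from: "merge_input p xs h \<Longrightarrow> lcp_from p (hd_inf xs) h"
  by (auto simp: merge_input_def lcp_from_def hd_inf_def split: list.splits)

lemma merge_input_next: "lcp_chain s xs \<Longrightarrow> merge_input s xs (next_h xs)"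
  by (cases xs) (auto simp: merge_input_def next_h_def)

lemma merge_input_after_output:
  assumes "merge_input p ys h" "le_ext (Some s) (hd_inf ys)"
  shows "merge_input s ys (lcp_ext (Some s) (hd_inf ys))"
  using assms by (auto simp: merge_input_def hd_inf_def split: list.splits)

lemma le_ext_exhausted: "le_ext (hd_inf xs) (hd_inf ys) \<Longrightarrow> xs = [] \<Longrightarrow> ys = []"
  by (auto simp: hd_inf_def split: list.splits)

lemma tail_lcps_Cons: "tail_lcps ((s, e) # xs) = next_h xs + tail_lcps xs"
  by (cases xs) (auto simp: tail_lcps_def next_h_def)

text \<open>Correctness and cost of binary LCP-merge.  The comparison bound telescopes:
  each step costs at most (new lcp value) - (old lcp value of the other input) + 1.\<close>
lemma lcp_merge_spec:
  "merge_input p xs h1 \<Longrightarrow> merge_input p ys h2 \<Longrightarrow> lcp_merge xs ys h1 h2 = (out, c, t) \<Longrightarrow>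
   lcp_chain p out \<and> mset (map fst out) = mset (map fst xs) + mset (map fst ys)
   \<and> c + h1 + h2 + tail_lcps xs + tail_lcps ys \<le> sum_list (map snd out) + length xs + length ys
   \<and> t = c + length xs + length ys"
proof (induction xs ys h1 h2 arbitrary: p out c t rule: lcp_merge.induct)
  case (1 xs ys h1 h2)
  show ?case
  proof (cases "xs = [] \<and> ys = []")
    case True
    then show ?thesis using "1.prems" by (simp add: tail_lcps_def merge_input_def)
  next
    case nonempty: False
    obtain x hx y h' cs
      where cmp: "lcp_compare (1, hd_inf xs, h1) (2, hd_inf ys, h2) = ((x, hx, y, h'), cs)"
      by (metis prod.exhaust)
    have "hd_inf xs \<noteq> None \<or> hd_inf ys \<noteq> None"
      using nonempty by (auto simp: hd_inf_def split: list.splits)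
    note spec = lcp_compare_spec[OF merge_input_lcp_from[OF "1.prems"(1)]
        merge_input_lcp_from[OF "1.prems"(2)] this cmp]
    show ?thesis
    proof (cases "x = 1")
      case True
      with spec nonempty le_ext_exhausted obtain s e xs' where xs: "xs = (s, e) # xs'"
        by (metis list.exhaust prod.exhaust)
      obtain out' c' t' where rec: "lcp_merge xs' ys (next_h xs') h' = (out', c', t')"
        by (metis prod.exhaust)
      have eq: "lcp_merge xs ys h1 h2 = ((s, hx) # out', cs + c', 1 + cs + t')"
        using nonempty cmp True xs rec by (subst lcp_merge.simps) simp
      from "1.prems"(1) xs have ps: "lexordp_eq p s" "h1 = lcp p s" "lcp_chain s xs'"
        by (auto simp: merge_input_def)
      have "merge_input s ys h'"
        using merge_input_after_output[OF "1.prems"(2)] spec True xs by (simp add: hd_inf_def)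
      note IH = "1.IH"(1)[OF nonempty cmp[symmetric] refl refl refl True xs refl
          merge_input_next[OF ps(3)] this rec]
      show ?thesis using IH eq "1.prems"(3) ps spec True xs tail_lcps_Cons[of s e xs'] by auto
    next
      case False
      with spec nonempty le_ext_exhausted obtain s e ys' where ys: "ys = (s, e) # ys'"
        by (metis list.exhaust prod.exhaust)
      obtain out' c' t' where rec: "lcp_merge xs ys' h' (next_h ys') = (out', c', t')"
        by (metis prod.exhaust)
      have eq: "lcp_merge xs ys h1 h2 = ((s, hx) # out', cs + c', 1 + cs + t')"
        using nonempty cmp False ys rec by (subst lcp_merge.simps) simp
      from "1.prems"(2) ys have ps: "lexordp_eq p s" "h2 = lcp p s" "lcp_chain s ys'"
        by (auto simp: merge_input_def)
      have "merge_input s xs h'"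
        using merge_input_after_output[OF "1.prems"(1), of s] spec False ys
          lcp_ext_sym[of "hd_inf xs" "Some s"] by (simp add: hd_inf_def)
      note IH = "1.IH"(2)[OF nonempty cmp[symmetric] refl refl refl False ys refl
          this merge_input_next[OF ps(3)] rec]
      show ?thesis using IH eq "1.prems"(3) ps spec False ys tail_lcps_Cons[of s e ys'] by auto
    qed
  qed
qed

section \<open>Binary LCP-mergesort\<close>

lemma nat_ceiling_log2: "nat \<lceil>log 2 (real n)\<rceil> = ceillog2 n"
  by (simp add: ceillog2_def log_def)

lemma ceillog2_halves:
  assumes "n \<ge> 2"
  shows "ceillog2 (n div 2) < ceillog2 n" "ceillog2 (n - n div 2) < ceillog2 n"
proof -
  define K where "K = ceillog2 n"
  have "n \<le> 2 ^ K" unfolding K_def by (rule le_two_power_ceillog2)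
  moreover have "K \<noteq> 0" using assms \<open>n \<le> 2 ^ K\<close> by (cases K) auto
  ultimately have "n \<le> 2 * 2 ^ (K - 1)" by (metis Suc_diff_1 not_gr0 power_Suc)
  then have "n div 2 \<le> 2 ^ (K - 1)" "n - n div 2 \<le> 2 ^ (K - 1)" by linarith+
  with assms \<open>K \<noteq> 0\<close> show "ceillog2 (n div 2) < ceillog2 n" "ceillog2 (n - n div 2) < ceillog2 n"
    unfolding K_def[symmetric] by (auto simp: ceillog2_le_iff[symmetric])
qed

lemma split_cost_bound:
  assumes "n \<ge> 2" "m = n div 2"
  shows "m * ceillog2 m + (n - m) * ceillog2 (n - m) + n \<le> n * ceillog2 n"
proof -
  define K where "K = ceillog2 n"
  have "ceillog2 m \<le> K - 1" "ceillog2 (n - m) \<le> K - 1" "K \<ge> 1"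
    using ceillog2_halves[OF assms(1)] assms(2) unfolding K_def by auto
  then have "m * ceillog2 m + (n - m) * ceillog2 (n - m) \<le> m * (K - 1) + (n - m) * (K - 1)"
    by (intro add_mono mult_le_mono2)
  also have "\<dots> = n * (K - 1)" using assms(2) by (simp add: add_mult_distrib[symmetric])
  finally show ?thesis using \<open>K \<ge> 1\<close> unfolding K_def[symmetric] by (cases K) auto
qed

lemma lcp_chain_Nil_sum: "lcp_chain [] out \<Longrightarrow> sum_list (map snd out) = LH (map snd out)"
  by (cases out) (auto simp: LH_def)

lemma lcp_chain_Nil_input: "lcp_chain [] l \<Longrightarrow> merge_input [] l 0"
  by (cases l) (auto simp: merge_input_def)

lemma tail_lcps_LH: "tail_lcps xs = LH (map snd xs)"
  by (cases xs) (auto simp: tail_lcps_def LH_def)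

lemma lcp_msort_spec:
  "lcp_msort xs = (out, c, t) \<Longrightarrow>
   lcp_chain [] out \<and> mset (map fst out) = mset xs
   \<and> c \<le> LH (map snd out) + length xs * ceillog2 (length xs)
   \<and> (if xs = [] then t = 1 else t + 1 \<le> c + length xs * ceillog2 (length xs) + 2 * length xs)"
proof (induction xs arbitrary: out c t rule: lcp_msort.induct)
  case (1 xs)
  show ?case
  proof (cases "length xs \<le> 1")
    case True
    then have "out = map (\<lambda>s. (s, 0)) xs" "c = 0" "t = 1"
      using "1.prems" by (simp_all add: lcp_msort.simps)
    with True show ?thesis by (cases xs) auto
  next
    case False
    define n where "n = length xs"
    define m where "m = length xs div 2"
    obtain l c1 t1 where r1: "lcp_msort (take m xs) = (l, c1, t1)" by (metis prod.exhaust)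
    obtain r c2 t2 where r2: "lcp_msort (drop m xs) = (r, c2, t2)" by (metis prod.exhaust)
    obtain o3 c3 t3 where r3: "lcp_merge l r 0 0 = (o3, c3, t3)" by (metis prod.exhaust)
    have "lcp_msort xs = (o3, c1 + c2 + c3, 1 + t1 + t2 + t3)"
      using False r1 r2 r3 unfolding m_def by (subst lcp_msort.simps) (simp add: Let_def)
    with "1.prems" have res: "out = o3" "c = c1 + c2 + c3" "t = 1 + t1 + t2 + t3" by auto
    have n2: "n \<ge> 2" and halves: "length (take m xs) = m" "length (drop m xs) = n - m"
      "m \<ge> 1" "n - m \<ge> 1" using False n_def m_def by auto
    from "1.IH"(1)[OF False m_def r1] halves have left: "lcp_chain [] l"
      "mset (map fst l) = mset (take m xs)" "c1 \<le> LH (map snd l) + m * ceillog2 m"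
      "t1 + 1 \<le> c1 + m * ceillog2 m + 2 * m" by (auto split: if_splits)
    from "1.IH"(2)[OF False m_def r1[symmetric] refl r2] halves have right: "lcp_chain [] r"
      "mset (map fst r) = mset (drop m xs)" "c2 \<le> LH (map snd r) + (n - m) * ceillog2 (n - m)"
      "t2 + 1 \<le> c2 + (n - m) * ceillog2 (n - m) + 2 * (n - m)" by (auto split: if_splits)
    have lengths: "length l = m" "length r = n - m"
      using left(2) right(2) halves by (metis length_map size_mset)+
    note merge = lcp_merge_spec[OF lcp_chain_Nil_input[OF left(1)] lcp_chain_Nil_input[OF right(1)] r3]
    have c3: "c3 + LH (map snd l) + LH (map snd r) \<le> LH (map snd o3) + n"
      using merge lcp_chain_Nil_sum[of o3] lengths halves by (simp add: tail_lcps_LH)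
    have t3: "t3 = c3 + n" using merge lengths halves by simp
    have "mset (map fst o3) = mset xs"
      using merge left(2) right(2) by (metis mset_append append_take_drop_id)
    moreover have "c \<le> LH (map snd out) + n * ceillog2 n"
      using c3 left(3) right(3) split_cost_bound[OF n2 m_def[folded n_def]] unfolding res
      by linarith
    moreover have "t + 1 \<le> c + n * ceillog2 n + 2 * n"
      using res t3 left(4) right(4) split_cost_bound[OF n2 m_def[folded n_def]] halves by linarith
    ultimately show ?thesis using res merge False n_def by auto
  qed
qed

lemma lcp_chain_sorted:
  "lcp_chain p out \<Longrightarrow> sorted_wrt lexordp_eq (map fst out) \<and> (\<forall>s\<in>fst ` set out. lexordp_eq p s)"
proof (induction p out rule: lcp_chain.induct)
  case (2 p s h r)
  then show ?case using lexordp_eq_trans by fastforce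
qed simp

lemma lcp_chain_nth: "lcp_chain p out \<Longrightarrow> 0 < i \<Longrightarrow> i < length out \<Longrightarrow>
   snd (out ! i) = lcp (fst (out ! (i - 1))) (fst (out ! i))"
proof (induction p out arbitrary: i rule: lcp_chain.induct)
  case (2 p s h r)
  then obtain j where i: "i = Suc j" by (cases i) auto
  show ?case
  proof (cases j)
    case 0
    then show ?thesis using 2 i by (cases r) auto
  next
    case (Suc k)
    then show ?thesis using "2.IH"[of j] "2.prems" i by auto
  qed
qed simp

theorem lcp_msort_correct:
  assumes "lcp_msort xs = (out, c, t)"
  shows "mset (map fst out) = mset xs" "sorted_wrt lexordp_eq (map fst out)"
    "\<And>i. 0 < i \<Longrightarrow> i < length xs \<Longrightarrow> snd (out ! i) = lcp (fst (out ! (i - 1))) (fst (out ! i))"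
    "c \<le> LH (map snd out) + length xs * ceillog2 (length xs)"
proof -
  note spec = lcp_msort_spec[OF assms]
  then have "length out = length xs" by (metis length_map size_mset)
  with spec lcp_chain_sorted lcp_chain_nth
  show "mset (map fst out) = mset xs" "sorted_wrt lexordp_eq (map fst out)"
    "\<And>i. 0 < i \<Longrightarrow> i < length xs \<Longrightarrow> snd (out ! i) = lcp (fst (out ! (i - 1))) (fst (out ! i))"
    "c \<le> LH (map snd out) + length xs * ceillog2 (length xs)" by metis+
qed

section \<open>Relating L(H) to the distinguishing prefix size\<close>

text \<open>Terminated strings are prefix-free: the terminator occurs only at the end.\<close>
lemma tstr_prefix_eq: "prefix (tstr s) (tstr u) \<Longrightarrow> s = u"
  unfolding tstr_def
proof (induction s arbitrary: u)
  case Nil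
  then show ?case
    by (cases u) (simp_all only: list.map append_Cons append_Nil Cons_prefix_Cons chr.distinct simp_thms)
next
  case (Cons a s)
  show ?case
  proof (cases u)
    case Nil
    with Cons.prems have "prefix (Ch a # (map Ch s @ [Term])) [Term]"
      by (simp only: list.map append_Cons append_Nil)
    then show ?thesis by (simp only: Cons_prefix_Cons chr.distinct simp_thms)
  next
    case (Cons b u')
    with Cons.prems have "prefix (Ch a # (map Ch s @ [Term])) (Ch b # (map Ch u' @ [Term]))"
      by (simp only: list.map append_Cons)
    then have "a = b" "prefix (map Ch s @ [Term]) (map Ch u' @ [Term])"
      by (simp_all only: Cons_prefix_Cons chr.inject)
    with Cons.IH Cons show ?thesis by blast
  qed
qed

lemma lcp_less_dist_prefix:
  assumes "s \<in> S" "t \<in> S" "s \<noteq> t"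
  shows "lcp s t < dist_prefix S s"
proof -
  let ?distinguishes = "\<lambda>k. \<forall>u \<in> S - {s}. \<not> prefix (take k (tstr s)) (tstr u)"
  have "?distinguishes (length s + 1)"
    using tstr_prefix_eq by (auto simp: tstr_def)
  then have dist: "?distinguishes (dist_prefix S s)"
    unfolding dist_prefix_def by (rule LeastI)
  show ?thesis
  proof (rule ccontr)
    assume "\<not> lcp s t < dist_prefix S s"
    then have k: "dist_prefix S s \<le> lcp s t" by simp
    have "take (dist_prefix S s) (tstr s) = map Ch (take (dist_prefix S s) s)"
      using k lcp_le_length(1)[of s t] by (simp add: tstr_def take_map)
    also have "\<dots> = map Ch (take (dist_prefix S s) t)" using take_lcp[OF k] by simp
    also have "\<dots> = take (dist_prefix S s) (tstr t)"
      using k lcp_le_length(2)[of s t] by (simp add: tstr_def take_map)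
    finally have "prefix (take (dist_prefix S s) (tstr s)) (tstr t)" by (metis take_is_prefix)
    then show False using dist assms by blast
  qed
qed

lemma lcp_chain_tail_le_dist_prefix:
  "lcp_chain p out \<Longrightarrow> distinct (map fst out) \<Longrightarrow> fst ` set out \<subseteq> S \<Longrightarrow>
   sum_list (map snd (tl out)) \<le> (\<Sum>s\<in>fst ` set (tl out). dist_prefix S s)"
proof (induction p out rule: lcp_chain.induct)
  case (2 p s h r)
  show ?case
  proof (cases r)
    case (Cons b r')
    obtain s' h' where b: "b = (s', h')" by (cases b)
    have "sum_list (map snd r') \<le> (\<Sum>s\<in>fst ` set r'. dist_prefix S s)"
      using 2 Cons b by simp
    moreover have "h' < dist_prefix S s'"
      using 2 Cons b lcp_less_dist_prefix[of s' S s] lcp_sym[of s s'] by auto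
    moreover have "s' \<notin> fst ` set r'" using "2.prems" Cons b by auto
    ultimately show ?thesis using Cons b by simp
  qed simp
qed simp

lemma LH_le_D:
  assumes "lcp_chain p out" "distinct (map fst out)"
  shows "LH (map snd out) \<le> D (fst ` set out)"
proof -
  have "LH (map snd out) = sum_list (map snd (tl out))" by (simp add: LH_def drop_Suc map_tl)
  also have "\<dots> \<le> (\<Sum>s\<in>fst ` set (tl out). dist_prefix (fst ` set out) s)"
    using lcp_chain_tail_le_dist_prefix[OF assms] by simp
  also have "\<dots> \<le> D (fst ` set out)"
    unfolding D_def by (cases out) (auto intro!: sum_mono2)
  finally show ?thesis .
qed

text \<open>With at least two strings every distinguishing prefix is nonempty, so n \<le> D + 1.\<close>
lemma card_le_D:
  assumes "finite S"
  shows "card S \<le> D S + 1"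
proof (cases "card S \<ge> 2")
  case True
  have "1 \<le> dist_prefix S s" if s: "s \<in> S" for s
  proof -
    from True s assms obtain u where "u \<in> S" "u \<noteq> s"
      by (metis card_le_Suc0_iff_eq not_less_eq_eq numeral_2_eq_2)
    with lcp_less_dist_prefix[OF s] show ?thesis by fastforce
  qed
  then have "(\<Sum>s\<in>S. (1::nat)) \<le> D S" unfolding D_def by (intro sum_mono) auto
  then show ?thesis by simp
qed simp

theorem lcp_msort_time:
  assumes "distinct xs"
  shows "real (snd (snd (lcp_msort xs)))
           \<le> 5 * (real (D (set xs)) + real (length xs) * log 2 (real (length xs)) + 1)"
proof -
  obtain out c t where r: "lcp_msort xs = (out, c, t)" by (metis prod.exhaust)
  note spec = lcp_msort_spec[OF r]
  define n where "n = length xs"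
  show ?thesis
  proof (cases "xs = []")
    case True
    then show ?thesis unfolding r using spec by (simp add: D_def)
  next
    case False
    then have n1: "n \<ge> 1" using n_def by (cases xs) auto
    have "set (map fst out) = set xs" using spec by (metis set_mset_mset)
    moreover have "distinct (map fst out)" using spec assms mset_eq_imp_distinct_iff by blast
    ultimately have LH: "LH (map snd out) \<le> D (set xs)" using LH_le_D[of "[]" out] spec by simp
    have "t + 1 \<le> c + n * ceillog2 n + 2 * n" "c \<le> LH (map snd out) + n * ceillog2 n"
      using spec False unfolding n_def by simp_all
    with LH have "t + 1 \<le> D (set xs) + 2 * (n * ceillog2 n) + 2 * n" by linarith
    then have "real (t + 1) \<le> real (D (set xs) + 2 * (n * ceillog2 n) + 2 * n)"
      by (rule of_nat_mono)
    then have time: "real t + 1 \<le> real (D (set xs)) + 2 * (real n * real (ceillog2 n)) + 2 * real n"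
      by simp
    have "n \<le> D (set xs) + 1" using card_le_D[of "set xs"] assms by (simp add: n_def distinct_card)
    then have size: "real n \<le> real (D (set xs)) + 1" by linarith
    have "real n * real (ceillog2 n) \<le> real n * (log 2 (real n) + 1)"
      using ceillog2_less_log[of n] n1 by (intro mult_left_mono) auto
    then have log: "real n * real (ceillog2 n) \<le> real n * log 2 (real n) + real n"
      by (simp add: distrib_left)
    have "real n * log 2 (real n) \<ge> 0" using n1 by simp
    with time size log have "real t \<le> 5 * (real (D (set xs)) + real n * log 2 (real n) + 1)"
      by (simp add: algebra_simps)
    then show ?thesis unfolding r snd_conv n_def[symmetric] .
  qed
qed

theorem mainTheorem3:
  shows "(\<forall>xs :: 'a::linorder list list. distinct xs \<longrightarrow>
           (case lcp_msort xs of (out, cmps, _) \<Rightarrow>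
              mset (map fst out) = mset xs
            \<and> sorted_wrt lexordp_eq (map fst out)
            \<and> (\<forall>i. 0 < i \<and> i < length xs \<longrightarrow>
                   snd (out ! i) = lcp (fst (out ! (i - 1))) (fst (out ! i)))
            \<and> cmps \<le> LH (map snd out) + length xs * nat \<lceil>log 2 (real (length xs))\<rceil>))
       \<and> (\<exists>c :: real. \<forall>xs :: 'a list list. distinct xs \<longrightarrow>
           real (snd (snd (lcp_msort xs)))
             \<le> c * (real (D (set xs)) + real (length xs) * log 2 (real (length xs)) + 1))"
proof (intro conjI allI impI exI)
  fix xs :: "'a list list"
  obtain out c t where r: "lcp_msort xs = (out, c, t)" by (metis prod.exhaust)
  show "case lcp_msort xs of (out, cmps, _) \<Rightarrow>
          mset (map fst out) = mset xs
        \<and> sorted_wrt lexordp_eq (map fst out)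
        \<and> (\<forall>i. 0 < i \<and> i < length xs \<longrightarrow>
               snd (out ! i) = lcp (fst (out ! (i - 1))) (fst (out ! i)))
        \<and> cmps \<le> LH (map snd out) + length xs * nat \<lceil>log 2 (real (length xs))\<rceil>"
    unfolding r prod.case nat_ceiling_log2 using lcp_msort_correct[OF r] by blast
next
  fix xs :: "'a list list"
  assume "distinct xs"
  then show "real (snd (snd (lcp_msort xs)))
               \<le> 5 * (real (D (set xs)) + real (length xs) * log 2 (real (length xs)) + 1)"
    by (rule lcp_msort_time)
qed

end
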